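(* Let $n\ge 1$, let $c\in\mathbb{R}^n$ with $c_1\ge c_2\ge\cdots\ge c_n\ge 0$, and let $u\in\mathbb{R}^n$ with $u_i>0$ for all $i$. Let $f(x)=\frac12\left(\sum_{i=1}^n x_i\right)^2-\sum_{i=1}^n c_ix_i$. For $k=0,\dots,n$ let $U_k=\sum_{i=1}^k u_i$ ($U_0=0$) and let $x^{(k)}$ be the vector with $x^{(k)}_i=u_i$ for $i\le k$ and $x^{(k)}_i=0$ for $i>k$. For $k=1,\dots,n$ let $G_k=U_{k-1}+\frac12u_k-c_k$, and suppose $\bar n$ is the smallest index in $\{1,\dots,n\}$ with $G_{\bar n}\ge 0$ and that $\bar n>1$. Let $\delta_1=\min\{c_{\bar n-1}-U_{\bar n-2},\,u_{\bar n-1}\}$, $\delta_2=\max\{c_{\bar n}-U_{\bar n-1},\,0\}$, $\bar x=x^{(\bar n-2)}+\delta_1e_{\bar n-1}$ and $\tilde x=x^{(\bar n-1)}+\delta_2e_{\bar n}$, where $e_i$ is the $i$-th standard unit vector. Then: (i) if $\delta_1=u_{\bar n-1}$, then $\min\{f(\bar x),f(\tilde x)\}=f(\tilde x)$; (ii) if $\delta_2=0$, then $\min\{f(\bar x),f(\tilde x)\}=f(\bar x)$. *)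

theory Defs
  imports Complex_Main
begin

text \<open>Vectors in R^n are represented as functions nat => real, indexed by 1..n
  (values outside 1..n are irrelevant / zero for the constructed vectors).\<close>

definition fobj :: "nat \<Rightarrow> (nat \<Rightarrow> real) \<Rightarrow> (nat \<Rightarrow> real) \<Rightarrow> real" where
  "fobj n c x = (1/2) * (\<Sum>i=1..n. x i)^2 - (\<Sum>i=1..n. c i * x i)"

definition Usum :: "(nat \<Rightarrow> real) \<Rightarrow> nat \<Rightarrow> real" where
  "Usum u k = (\<Sum>i=1..k. u i)"

definition xvec :: "(nat \<Rightarrow> real) \<Rightarrow> nat \<Rightarrow> nat \<Rightarrow> real" where
  "xvec u k = (\<lambda>i. if 1 \<le> i \<and> i \<le> k then u i else 0)"

definition unitv :: "nat \<Rightarrow> nat \<Rightarrow> real" where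
  "unitv j = (\<lambda>i. if i = j then 1 else 0)"

definition Gval :: "(nat \<Rightarrow> real) \<Rightarrow> (nat \<Rightarrow> real) \<Rightarrow> nat \<Rightarrow> real" where
  "Gval c u k = Usum u (k - 1) + (1/2) * u k - c k"

end

theory Submission
  imports Defs
begin

text \<open>Along a ray x^(k) + t e_j with k < j, the objective is, up to a constant, the
  quadratic (U_k + t)^2/2 - c_j t, i.e. its minimum plus (t - (c_j - U_k))^2/2; so of two points
  on the ray, the one whose parameter is closer to c_j - U_k has the smaller value. In case (i),
  xbar = x^(nb-1) and xtil are the points t = 0 and t = max (c_nb - U_(nb-1)) 0 of the ray in
  direction e_nb; in case (ii), xtil = x^(nb-2) + u_(nb-1) e_(nb-1) and xbar is the point
  t = min (c_(nb-1) - U_(nb-2)) u_(nb-1) of the ray in direction e_(nb-1). Either way the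
  clamped parameter is the closer one.\<close>

lemma half_square_shift_le:
  fixes A b s t :: real
  assumes "\<bar>s - (b - A)\<bar> \<le> \<bar>t - (b - A)\<bar>"
  shows "(A + s)\<^sup>2 / 2 - b * s \<le> (A + t)\<^sup>2 / 2 - b * t"
proof -
  have completed_square: "(A + r)\<^sup>2 / 2 - b * r = (r - (b - A))\<^sup>2 / 2 + (A\<^sup>2 - (b - A)\<^sup>2) / 2"
    for r :: real
    by (simp add: power2_eq_square field_simps)
  have "(s - (b - A))\<^sup>2 \<le> (t - (b - A))\<^sup>2"
    using assms by (simp add: abs_le_square_iff)
  then show ?thesis
    unfolding completed_square by simp
qed

lemma sum_mult_xvec:
  assumes "k \<le> n"
  shows "(\<Sum>i=1..n. g i * xvec u k i) = (\<Sum>i=1..k. g i * u i)"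
proof -
  have "(\<Sum>i=1..n. g i * xvec u k i) = (\<Sum>i\<in>{1..n} \<inter> {i. i \<le> k}. g i * u i)"
    by (subst sum.inter_restrict) (auto simp: xvec_def intro!: sum.cong)
  also have "{1..n} \<inter> {i. i \<le> k} = {1..k}"
    using assms by auto
  finally show ?thesis .
qed

lemma sum_mult_unitv:
  assumes "j \<in> {1..n}"
  shows "(\<Sum>i=1..n. g i * unitv j i) = g j"
  using assms by (simp add: unitv_def if_distrib cong: if_cong)

lemma fobj_xvec_plus_unitv:
  assumes "k < j" "j \<le> n"
  shows "fobj n c (\<lambda>i. xvec u k i + t * unitv j i)
    = (Usum u k + t)\<^sup>2 / 2 - c j * t - (\<Sum>i=1..k. c i * u i)"
proof -
  have "(\<Sum>i=1..n. g i * (xvec u k i + t * unitv j i)) = (\<Sum>i=1..k. g i * u i) + g j * t"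
    for g :: "nat \<Rightarrow> real"
    using assms sum_mult_xvec[of k n g u] sum_mult_unitv[of j n "\<lambda>i. g i * t"]
    by (simp add: distrib_left sum.distrib mult.assoc mult.left_commute)
  from this[of "\<lambda>_. 1"] this[of c] show ?thesis
    by (simp add: fobj_def Usum_def)
qed

lemma fobj_ray_le_if_closer:
  assumes "k < j" "j \<le> n"
    and "\<bar>s - (c j - Usum u k)\<bar> \<le> \<bar>t - (c j - Usum u k)\<bar>"
  shows "fobj n c (\<lambda>i. xvec u k i + s * unitv j i) \<le> fobj n c (\<lambda>i. xvec u k i + t * unitv j i)"
  using assms half_square_shift_le[of s "c j" "Usum u k" t]
  by (simp add: fobj_xvec_plus_unitv mult.commute)

lemma xvec_Suc: "xvec u (Suc k) = (\<lambda>i. xvec u k i + u (Suc k) * unitv (Suc k) i)"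
  by (auto simp: xvec_def unitv_def fun_eq_iff le_Suc_eq)

theorem corollary3:
  fixes n nb :: nat and c u :: "nat \<Rightarrow> real"
  assumes n_ge: "n \<ge> 1"
    and c_mono: "\<And>i j. 1 \<le> i \<Longrightarrow> i \<le> j \<Longrightarrow> j \<le> n \<Longrightarrow> c j \<le> c i"
    and c_nonneg: "c n \<ge> 0"
    and u_pos: "\<And>i. 1 \<le> i \<Longrightarrow> i \<le> n \<Longrightarrow> u i > 0"
    and nb_range: "1 \<le> nb" "nb \<le> n"
    and nb_G: "Gval c u nb \<ge> 0"
    and nb_least: "\<And>k. 1 \<le> k \<Longrightarrow> k < nb \<Longrightarrow> Gval c u k < 0"
    and nb_gt1: "nb > 1"
  defines "xbar \<equiv> (\<lambda>i. xvec u (nb - 2) i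
            + min (c (nb - 1) - Usum u (nb - 2)) (u (nb - 1)) * unitv (nb - 1) i)"
    and "xtil \<equiv> (\<lambda>i. xvec u (nb - 1) i + max (c nb - Usum u (nb - 1)) 0 * unitv nb i)"
  shows "(min (c (nb - 1) - Usum u (nb - 2)) (u (nb - 1)) = u (nb - 1) \<longrightarrow> min (fobj n c xbar) (fobj n c xtil) = fobj n c xtil)
       \<and> (max (c nb - Usum u (nb - 1)) 0 = 0 \<longrightarrow> min (fobj n c xbar) (fobj n c xtil) = fobj n c xbar)"
proof (intro conjI impI)
  have "nb - 1 = Suc (nb - 2)"
    using nb_gt1 by simp
  then have xvec_prev: "xvec u (nb - 1) = (\<lambda>i. xvec u (nb - 2) i + u (nb - 1) * unitv (nb - 1) i)"
    using xvec_Suc[of u "nb - 2"] by (simp only:)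
  show "min (fobj n c xbar) (fobj n c xtil) = fobj n c xtil"
    if "min (c (nb - 1) - Usum u (nb - 2)) (u (nb - 1)) = u (nb - 1)"
  proof -
    have "xbar = (\<lambda>i. xvec u (nb - 1) i + 0 * unitv nb i)"
      using that unfolding xbar_def xvec_prev by simp
    moreover have "fobj n c xtil \<le> fobj n c (\<lambda>i. xvec u (nb - 1) i + 0 * unitv nb i)"
      unfolding xtil_def using nb_range nb_gt1 by (intro fobj_ray_le_if_closer) auto
    ultimately show ?thesis
      by (simp only: min.absorb2)
  qed
  show "min (fobj n c xbar) (fobj n c xtil) = fobj n c xbar"
    if "max (c nb - Usum u (nb - 1)) 0 = 0"
  proof -
    have "xtil = (\<lambda>i. xvec u (nb - 2) i + u (nb - 1) * unitv (nb - 1) i)"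
      using that unfolding xtil_def xvec_prev by simp
    moreover have "fobj n c xbar \<le> fobj n c (\<lambda>i. xvec u (nb - 2) i + u (nb - 1) * unitv (nb - 1) i)"
      unfolding xbar_def using nb_range nb_gt1 by (intro fobj_ray_le_if_closer) (auto simp: min_def)
    ultimately show ?thesis
      by (simp only: min.absorb1)
  qed
qed

end
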